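(* Fix an integer $n\ge 1$. For every classical strategy $h$, the expected score satisfies $V(\mathcal{F}_{\mathrm{BV}},h)\le \frac{1}{2^n-1}$, and this value is attained; hence $V(\mathcal{F}_{\mathrm{BV}},C)=\max_{h\in C}V(\mathcal{F}_{\mathrm{BV}},h)=\frac{1}{2^n-1}$. Moreover $V(\mathcal{F}_{\mathrm{BV}},Q)=\sup_{h\in Q}V(\mathcal{F}_{\mathrm{BV}},h)=1$, so that \[ \frac{V(\mathcal{F}_{\mathrm{BV}},Q)}{V(\mathcal{F}_{\mathrm{BV}},C)}=2^n-1 . \]
   Context: Let $\omega=\{0,1\}^n$. For $u\in\omega\setminus\{0^n\}$ and $b\in\{0,1\}$ let $S_{u,b}=\{x\in\omega : u\cdot x\equiv b \pmod 2\}$ (so $|S_{u,b}|=2^{n-1}$), and let $\mathcal{F}_{\mathrm{BV}}=\{S_{u,b}\}$, a family of $2(2^n-1)$ subsets. For a nonempty $S\subset\omega$, the subset state is $|S\rangle=|S|^{-1/2}\sum_{x\in S}|x\rangle$ on $n$ qubits. In the complement sampling game, a set $S$ is drawn uniformly at random from $\mathcal{F}_{\mathrm{BV}}$, the player receives one copy of $|S\rangle$ and outputs $y\in\omega$; the strategy is described by the conditional distribution $h(y\mid S)$. The score is $\sigma(S,y)=+1$ if $y\in\bar S=\omega\setminus S$ and $\sigma(S,y)=-1$ otherwise, and the expected score is $V(\mathcal{F}_{\mathrm{BV}},h)=\mathbb{E}_{S\sim\mathrm{Unif}(\mathcal{F}_{\mathrm{BV}})}\mathbb{E}_{y\sim h(\cdot\mid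 S)}[\sigma(S,y)]$. A quantum strategy (set $Q$) may apply any quantum operation to $|S\rangle$ (with ancillas) followed by any measurement yielding $y$. A classical strategy (set $C$) first measures $|S\rangle$ in the computational basis, obtaining $x$ uniformly distributed on $S$, and then outputs $y$ according to an arbitrary (possibly randomized) rule $h(y\mid x)$ depending only on $x$, so that $h(y\mid S)=\sum_{x}h(y\mid x)\,|\langle x|S\rangle|^2$. *)

theory Defs
  imports Complex_Main
begin

definition omega :: "nat \<Rightarrow> bool list set" where
  "omega n = {x. length x = n}"

definition bdot :: "bool list \<Rightarrow> bool list \<Rightarrow> bool" where
  "bdot u x = odd (\<Sum>i<length u. (if u ! i \<and> x ! i then 1 else 0 :: nat))"

definition Sub :: "nat \<Rightarrow> bool list \<Rightarrow> bool \<Rightarrow> bool list set" where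
  "Sub n u b = {x \<in> omega n. bdot u x = b}"

definition FBV :: "nat \<Rightarrow> bool list set set" where
  "FBV n = {Sub n u b | u b. u \<in> omega n \<and> u \<noteq> replicate n False}"

text \<open>Amplitudes of the subset state |S> in the computational basis.\<close>
definition ket :: "bool list set \<Rightarrow> bool list \<Rightarrow> complex" where
  "ket S x = (if x \<in> S then complex_of_real (1 / sqrt (real (card S))) else 0)"

definition score :: "nat \<Rightarrow> bool list set \<Rightarrow> bool list \<Rightarrow> real" where
  "score n S y = (if y \<in> omega n - S then 1 else -1)"

definition V :: "nat \<Rightarrow> (bool list set \<Rightarrow> bool list \<Rightarrow> real) \<Rightarrow> real" where
  "V n h = (\<Sum>S\<in>FBV n. \<Sum>y\<in>omega n. h S y * score n S y) / real (card (FBV n))"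

text \<open>Classical strategies: measure in the computational basis, then apply
  an arbitrary randomized rule g(y|x) (a stochastic kernel on omega).\<close>
definition stochastic :: "nat \<Rightarrow> (bool list \<Rightarrow> bool list \<Rightarrow> real) \<Rightarrow> bool" where
  "stochastic n g \<longleftrightarrow> (\<forall>x\<in>omega n. (\<forall>y\<in>omega n. 0 \<le> g x y) \<and> (\<Sum>y\<in>omega n. g x y) = 1)"

definition classical :: "nat \<Rightarrow> (bool list set \<Rightarrow> bool list \<Rightarrow> real) set" where
  "classical n = {h. \<exists>g. stochastic n g \<and>
      h = (\<lambda>S y. \<Sum>x\<in>omega n. g x y * (cmod (ket S x))\<^sup>2)}"

text \<open>Quantum strategies: any quantum operation followed by a measurement with
  outcomes in omega is equivalent (Stinespring/Naimark) to a POVM {E_y} on the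
  n-qubit space; operators are matrices indexed by omega.\<close>
definition psd :: "nat \<Rightarrow> (bool list \<Rightarrow> bool list \<Rightarrow> complex) \<Rightarrow> bool" where
  "psd n A \<longleftrightarrow> (\<forall>v. let q = (\<Sum>x\<in>omega n. \<Sum>x'\<in>omega n. cnj (v x) * A x x' * v x')
                      in Im q = 0 \<and> 0 \<le> Re q)"

definition povm :: "nat \<Rightarrow> (bool list \<Rightarrow> bool list \<Rightarrow> bool list \<Rightarrow> complex) \<Rightarrow> bool" where
  "povm n E \<longleftrightarrow> (\<forall>y\<in>omega n. psd n (E y)) \<and>
     (\<forall>x\<in>omega n. \<forall>x'\<in>omega n. (\<Sum>y\<in>omega n. E y x x') = (if x = x' then 1 else 0))"

definition quantum :: "nat \<Rightarrow> (bool list set \<Rightarrow> bool list \<Rightarrow> real) set" where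
  "quantum n = {h. \<exists>E. povm n E \<and>
      h = (\<lambda>S y. Re (\<Sum>x\<in>omega n. \<Sum>x'\<in>omega n. cnj (ket S x) * E y x x' * ket S x'))}"

end

theory Submission
  imports Defs
begin

(* Measuring |S> yields x uniform on S. Among the 2^n - 1 hyperplanes u.x = b through x, those
   missing a given y /= x outnumber those containing y by exactly one, while y = x lies in all of
   them. Hence a classical rule g(y|x) has value (1 - sum_x g(x|x)) / (2^n - 1), which is maximal
   when g never returns its input. A quantum player measures in the basis of rows of Grover's
   diffusion operator 2|+><+| - I: row y is orthogonal to |S> whenever y is in S, because
   |S| = 2^(n-1), so the outcome always lies in the complement of S. *)

lemma omega_eq_lists: "omega n = {xs. set xs \<subseteq> UNIV \<and> length xs = n}"
  by (simp add: omega_def)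

lemma finite_omega [simp]: "finite (omega n)"
  unfolding omega_eq_lists by (rule finite_lists_length_eq) simp

lemma card_omega: "card (omega n) = 2 ^ n"
  unfolding omega_eq_lists by (subst card_lists_length_eq) simp_all

lemma card_half_if_involution:
  assumes "finite A"
    and maps: "\<And>a. a \<in> A \<Longrightarrow> f a \<in> A"
    and involution: "\<And>a. a \<in> A \<Longrightarrow> f (f a) = a"
    and swaps: "\<And>a. a \<in> A \<Longrightarrow> P (f a) \<longleftrightarrow> \<not> P a"
  shows "2 * card {a \<in> A. P a} = card A"
proof -
  have "bij_betw f {a \<in> A. P a} {a \<in> A. \<not> P a}"
    by (rule bij_betw_byWitness[where f' = f]) (use maps involution swaps in auto)
  then have "card {a \<in> A. P a} = card {a \<in> A. \<not> P a}"
    by (rule bij_betw_same_card)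
  moreover have "card {a \<in> A. P a} + card {a \<in> A. \<not> P a} = card A"
    using \<open>finite A\<close> by (subst card_Un_disjoint[symmetric]) (auto intro: arg_cong[where f = card])
  ultimately show ?thesis
    by simp
qed

lemma sum_sign_if_involution:
  assumes "finite A"
    and "\<And>a. a \<in> A \<Longrightarrow> f a \<in> A"
    and "\<And>a. a \<in> A \<Longrightarrow> f (f a) = a"
    and "\<And>a. a \<in> A \<Longrightarrow> P (f a) \<longleftrightarrow> \<not> P a"
  shows "(\<Sum>a\<in>A. if P a then 1 else -1 :: real) = 0"
proof -
  have "(\<Sum>a\<in>A. if P a then 1 else -1 :: real) = (\<Sum>a\<in>A. 2 * (if P a then 1 else 0) - 1)"
    by (intro sum.cong) auto
  also have "\<dots> = 2 * real (card {a \<in> A. P a}) - real (card A)"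
    using \<open>finite A\<close> by (simp add: sum_subtractf sum_distrib_left[symmetric] sum.inter_filter[symmetric])
  also have "\<dots> = 0"
    using arg_cong[OF card_half_if_involution[of A f P], of real] assms by simp
  finally show ?thesis .
qed

definition flip_bit :: "nat \<Rightarrow> bool list \<Rightarrow> bool list" where
  "flip_bit j x = x[j := \<not> x ! j]"

lemma length_flip_bit [simp]: "length (flip_bit j x) = length x"
  by (simp add: flip_bit_def)

lemma flip_bit_flip_bit [simp]: "flip_bit j (flip_bit j x) = x"
  by (cases "j < length x") (simp_all add: flip_bit_def list_update_beyond)

lemma flip_bit_in_omega [simp]: "flip_bit j x \<in> omega n \<longleftrightarrow> x \<in> omega n"
  by (simp add: omega_def)

lemma flip_bit_neq: "j < length x \<Longrightarrow> flip_bit j x \<noteq> x"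
  by (metis flip_bit_def nth_list_update_eq)

lemma bdot_commute: "length u = length x \<Longrightarrow> bdot u x = bdot x u"
  unfolding bdot_def by (simp add: conj_commute)

lemma bdot_flip_bit:
  assumes j: "j < length u" and "length x = length u"
  shows "bdot (flip_bit j u) x \<longleftrightarrow> bdot u x \<noteq> x ! j"
proof -
  let ?t = "\<lambda>v i. if v ! i \<and> x ! i then 1 else 0 :: nat"
  have j_in: "j \<in> {..<length u}"
    using j by simp
  have "(\<Sum>i\<in>{..<length u} - {j}. ?t (flip_bit j u) i) = (\<Sum>i\<in>{..<length u} - {j}. ?t u i)"
    by (intro sum.cong) (auto simp: flip_bit_def)
  then show ?thesis
    unfolding bdot_def using sum.remove[OF _ j_in, of "?t u"] sum.remove[OF _ j_in, of "?t (flip_bit j u)"] j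
    by (auto simp: flip_bit_def)
qed

lemma bdot_zero_left [simp]: "bdot (replicate n False) x = False"
  unfolding bdot_def by simp

lemma bdot_zero_right [simp]: "length u = n \<Longrightarrow> bdot u (replicate n False) = False"
  unfolding bdot_def by simp

lemma bdot_unit:
  assumes "length u = n" and "j < n"
  shows "bdot u (flip_bit j (replicate n False)) = u ! j"
  using assms bdot_flip_bit[of j "replicate n False" u] bdot_commute[of u "flip_bit j (replicate n False)"]
  by simp

lemma replicate_False_in_omega [simp]: "replicate n False \<in> omega n"
  by (simp add: omega_def)

lemma exists_bit_if_nonzero:
  "u \<in> omega n \<Longrightarrow> u \<noteq> replicate n False \<Longrightarrow> \<exists>j<n. u ! j"
  by (auto simp: omega_def list_eq_iff_nth_eq)

lemma card_Sub:
  assumes u: "u \<in> omega n" "u \<noteq> replicate n False"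
  shows "card (Sub n u b) = 2 ^ (n - 1)"
proof -
  obtain j where j: "j < n" "u ! j"
    using exists_bit_if_nonzero[OF u] by blast
  have "bdot u (flip_bit j x) \<longleftrightarrow> \<not> bdot u x" if "x \<in> omega n" for x
    using that u j bdot_flip_bit[of j x u] bdot_commute[of u x] bdot_commute[of u "flip_bit j x"]
    by (simp add: omega_def)
  then have "2 * card (Sub n u b) = 2 ^ n"
    unfolding Sub_def card_omega[symmetric]
    by (intro card_half_if_involution[where f = "flip_bit j"]) auto
  then show ?thesis
    using j by (cases n) auto
qed

lemma Sub_subset_omega: "Sub n u b \<subseteq> omega n"
  by (auto simp: Sub_def)

lemma FBV_member:
  assumes "S \<in> FBV n"
  shows "S \<subseteq> omega n" and "card S = 2 ^ (n - 1)"
  using assms Sub_subset_omega card_Sub by (auto simp: FBV_def)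

lemma FBV_member_nonempty: "S \<in> FBV n \<Longrightarrow> S \<noteq> {}"
  using FBV_member[of S n] by auto

lemma inj_on_Sub: "inj_on (\<lambda>(u, b). Sub n u b) (omega n \<times> UNIV)"
proof (rule inj_onI, clarsimp)
  fix u b u' b'
  assume u: "u \<in> omega n" and u': "u' \<in> omega n" and eq: "Sub n u b = Sub n u' b'"
  have "replicate n False \<in> Sub n u b \<longleftrightarrow> replicate n False \<in> Sub n u' b'"
    using eq by simp
  then have b: "b = b'"
    using u u' by (simp add: Sub_def omega_def)
  have "u ! j = u' ! j" if "j < n" for j
  proof -
    have "flip_bit j (replicate n False) \<in> Sub n u b \<longleftrightarrow> flip_bit j (replicate n False) \<in> Sub n u' b'"
      using eq by simp
    then show ?thesis
      using u u' that b bdot_unit[of u n j] bdot_unit[of u' n j] by (auto simp: Sub_def omega_def)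
  qed
  with u u' b show "u = u' \<and> b = b'"
    by (auto simp: omega_def intro: nth_equalityI)
qed

lemma FBV_eq_image: "FBV n = (\<lambda>(u, b). Sub n u b) ` ((omega n - {replicate n False}) \<times> UNIV)"
  by (auto simp: FBV_def)

lemma sum_FBV:
  "(\<Sum>S\<in>FBV n. F S) = (\<Sum>u\<in>omega n - {replicate n False}. F (Sub n u True) + F (Sub n u False))"
proof -
  have "inj_on (\<lambda>(u, b). Sub n u b) ((omega n - {replicate n False}) \<times> UNIV)"
    by (rule inj_on_subset[OF inj_on_Sub]) auto
  then have "(\<Sum>S\<in>FBV n. F S) = (\<Sum>(u, b)\<in>(omega n - {replicate n False}) \<times> UNIV. F (Sub n u b))"
    unfolding FBV_eq_image by (simp add: sum.reindex case_prod_beta')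
  also have "\<dots> = (\<Sum>u\<in>omega n - {replicate n False}. F (Sub n u True) + F (Sub n u False))"
    by (simp add: sum.cartesian_product[symmetric] UNIV_bool add.commute)
  finally show ?thesis .
qed

lemma card_FBV: "card (FBV n) = 2 * (2 ^ n - 1)"
  using sum_FBV[of "\<lambda>_. 1 :: nat" n] by (simp add: card_omega card_Diff_singleton)

lemma sum_parity_agreement:
  assumes x: "x \<in> omega n" and y: "y \<in> omega n"
  shows "(\<Sum>u\<in>omega n. if bdot u x = bdot u y then 1 else -1 :: real) = (if x = y then 2 ^ n else 0)"
proof (cases "x = y")
  case True
  then show ?thesis
    by (simp add: card_omega)
next
  case False
  with x y obtain j where j: "j < n" "x ! j \<noteq> y ! j"
    by (auto simp: omega_def list_eq_iff_nth_eq)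
  have "bdot (flip_bit j u) x = bdot (flip_bit j u) y \<longleftrightarrow> bdot u x \<noteq> bdot u y"
    if "u \<in> omega n" for u
    using that x y j bdot_flip_bit[of j u x] bdot_flip_bit[of j u y] by (auto simp: omega_def)
  then have "(\<Sum>u\<in>omega n. if bdot u x = bdot u y then 1 else -1 :: real) = 0"
    by (intro sum_sign_if_involution[where f = "flip_bit j"]) auto
  with False show ?thesis
    by simp
qed

lemma sum_FBV_score:
  assumes x: "x \<in> omega n" and y: "y \<in> omega n"
  shows "(\<Sum>S\<in>FBV n. if x \<in> S then score n S y else 0) = (if x = y then 1 - 2 ^ n else 1)"
proof -
  let ?agree = "\<lambda>u. if bdot u x = bdot u y then 1 else -1 :: real"
  \<comment> \<open>x lies in exactly one of the two sets, and y avoids that one iff u separates x and y\<close>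
  have pair: "(if x \<in> Sub n u True then score n (Sub n u True) y else 0)
      + (if x \<in> Sub n u False then score n (Sub n u False) y else 0) = - ?agree u" for u
    using x y by (auto simp: Sub_def score_def)
  have "(\<Sum>S\<in>FBV n. if x \<in> S then score n S y else 0)
      = - (\<Sum>u\<in>omega n - {replicate n False}. ?agree u)"
    by (simp add: sum_FBV pair sum_negf)
  also have "\<dots> = - ((\<Sum>u\<in>omega n. ?agree u) - ?agree (replicate n False))"
    by (simp add: sum_diff1)
  also have "\<dots> = (if x = y then 1 - 2 ^ n else 1)"
    using sum_parity_agreement[OF x y] by simp
  finally show ?thesis .
qed

lemma norm_ket_square: "(cmod (ket S x))\<^sup>2 = (if x \<in> S then 1 / real (card S) else 0)"
  by (simp add: ket_def norm_divide power_divide)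

lemma V_classical:
  assumes n: "n \<ge> 1" and g: "stochastic n g"
  shows "V n (\<lambda>S y. \<Sum>x\<in>omega n. g x y * (cmod (ket S x))\<^sup>2)
    = (1 - (\<Sum>x\<in>omega n. g x x)) / (2 ^ n - 1)"
proof -
  define h where "h = (\<lambda>S y. \<Sum>x\<in>omega n. g x y * (cmod (ket S x))\<^sup>2)"
  define G where "G = (\<Sum>x\<in>omega n. g x x)"
  let ?c = "\<lambda>x y S. if x \<in> S then score n S y else 0"
  have per_set: "(\<Sum>y\<in>omega n. h S y * score n S y)
      = (\<Sum>x\<in>omega n. \<Sum>y\<in>omega n. g x y * ?c x y S) / 2 ^ (n - 1)" if "S \<in> FBV n" for S
    using FBV_member(2)[OF that]
    by (subst sum.swap) (simp add: h_def norm_ket_square sum_divide_distrib sum_distrib_right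
        if_distrib if_distribR cong: if_cong)
  have row: "(\<Sum>y\<in>omega n. g x y * (if x = y then 1 - 2 ^ n else 1)) = 1 - 2 ^ n * g x x"
    if x: "x \<in> omega n" for x
  proof -
    have "(\<Sum>y\<in>omega n. g x y * (if x = y then 1 - 2 ^ n else 1))
        = (\<Sum>y\<in>omega n. g x y) - (\<Sum>y\<in>omega n. if y = x then 2 ^ n * g x x else 0)"
      by (subst sum_subtractf[symmetric]) (auto intro: sum.cong simp: algebra_simps)
    also have "\<dots> = 1 - 2 ^ n * g x x"
      using g x by (simp add: stochastic_def)
    finally show ?thesis .
  qed
  have "(\<Sum>S\<in>FBV n. \<Sum>y\<in>omega n. h S y * score n S y)
      = (\<Sum>x\<in>omega n. \<Sum>y\<in>omega n. g x y * (\<Sum>S\<in>FBV n. ?c x y S)) / 2 ^ (n - 1)"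
    by (simp add: per_set sum_divide_distrib[symmetric] sum_distrib_left sum.swap[of _ "FBV n"])
  also have "\<dots> = (\<Sum>x\<in>omega n. 1 - 2 ^ n * g x x) / 2 ^ (n - 1)"
    by (simp add: sum_FBV_score row)
  also have "\<dots> = 2 ^ n * (1 - G) / 2 ^ (n - 1)"
    by (simp add: G_def sum_subtractf card_omega sum_distrib_left right_diff_distrib)
  also have "\<dots> = 2 * (1 - G)"
    using n by (cases n) simp_all
  finally have "V n h = 2 * (1 - G) / (2 * (2 ^ n - 1))"
    unfolding V_def by (simp add: card_FBV)
  then show ?thesis
    by (simp only: h_def G_def mult_divide_mult_cancel_left_if) simp
qed

lemma sum_score_le_1:
  assumes "\<And>y. y \<in> omega n \<Longrightarrow> 0 \<le> p y" and "(\<Sum>y\<in>omega n. p y) = 1"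
  shows "(\<Sum>y\<in>omega n. p y * score n S y) \<le> 1"
proof -
  have "(\<Sum>y\<in>omega n. p y * score n S y) \<le> (\<Sum>y\<in>omega n. p y)"
    using assms(1) by (intro sum_mono) (auto simp: score_def)
  with assms(2) show ?thesis
    by simp
qed

lemma sum_score_eq_1:
  assumes "(\<Sum>y\<in>omega n. p y) = 1" and "\<And>y. y \<in> S \<Longrightarrow> p y = 0"
  shows "(\<Sum>y\<in>omega n. p y * score n S y) = 1"
proof -
  have "(\<Sum>y\<in>omega n. p y * score n S y) = (\<Sum>y\<in>omega n. p y)"
    using assms(2) by (intro sum.cong) (auto simp: score_def)
  with assms(1) show ?thesis
    by simp
qed

lemma V_le_1:
  assumes "\<And>S. S \<in> FBV n \<Longrightarrow> (\<Sum>y\<in>omega n. h S y * score n S y) \<le> 1"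
  shows "V n h \<le> 1"
proof -
  have "(\<Sum>S\<in>FBV n. \<Sum>y\<in>omega n. h S y * score n S y) \<le> real (card (FBV n))"
    using sum_mono[of "FBV n" _ "\<lambda>_. 1 :: real"] assms by simp
  then show ?thesis
    unfolding V_def by (cases "card (FBV n) = 0") (simp_all add: divide_le_eq)
qed

lemma V_eq_1:
  assumes "n \<ge> 1" and "\<And>S. S \<in> FBV n \<Longrightarrow> (\<Sum>y\<in>omega n. h S y * score n S y) = 1"
  shows "V n h = 1"
proof -
  have "card (FBV n) \<noteq> 0"
    using assms(1) one_less_power[of "2 :: nat" n] by (simp add: card_FBV)
  with assms(2) show ?thesis
    by (simp add: V_def)
qed

lemma ket_normalized:
  assumes "S \<subseteq> omega n" and "S \<noteq> {}"
  shows "(\<Sum>x\<in>omega n. cnj (ket S x) * ket S x) = 1"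
proof -
  have "card S \<noteq> 0"
    using assms finite_subset[OF assms(1)] by simp
  have "(\<Sum>x\<in>omega n. cnj (ket S x) * ket S x) = of_real (\<Sum>x\<in>omega n. (cmod (ket S x))\<^sup>2)"
    unfolding of_real_sum by (intro sum.cong refl) (simp only: complex_norm_square mult.commute)
  also have "(\<Sum>x\<in>omega n. (cmod (ket S x))\<^sup>2) = (\<Sum>x\<in>{x \<in> omega n. x \<in> S}. 1 / real (card S))"
    unfolding norm_ket_square by (rule sum.inter_filter[symmetric]) simp
  also have "{x \<in> omega n. x \<in> S} = S"
    using assms(1) by blast
  finally show ?thesis
    using \<open>card S \<noteq> 0\<close> by simp
qed

lemma quantum_strategy_distribution:
  assumes h: "h \<in> quantum n" and S: "S \<subseteq> omega n" "S \<noteq> {}"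
  shows "\<And>y. y \<in> omega n \<Longrightarrow> 0 \<le> h S y" and "(\<Sum>y\<in>omega n. h S y) = 1"
proof -
  obtain E where E: "povm n E"
    and hE: "h = (\<lambda>S y. Re (\<Sum>x\<in>omega n. \<Sum>x'\<in>omega n. cnj (ket S x) * E y x x' * ket S x'))"
    using h unfolding quantum_def by blast
  show "0 \<le> h S y" if "y \<in> omega n" for y
    using E that unfolding povm_def psd_def hE by (auto simp: Let_def)
  have "(\<Sum>y\<in>omega n. \<Sum>x\<in>omega n. \<Sum>x'\<in>omega n. cnj (ket S x) * E y x x' * ket S x')
      = (\<Sum>x\<in>omega n. \<Sum>x'\<in>omega n. \<Sum>y\<in>omega n. cnj (ket S x) * E y x x' * ket S x')"
    by (subst sum.swap) (intro sum.cong refl sum.swap)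
  also have "\<dots> = (\<Sum>x\<in>omega n. \<Sum>x'\<in>omega n. cnj (ket S x) * (\<Sum>y\<in>omega n. E y x x') * ket S x')"
    by (simp add: sum_distrib_left sum_distrib_right)
  also have "\<dots> = (\<Sum>x\<in>omega n. \<Sum>x'\<in>omega n. if x = x' then cnj (ket S x) * ket S x' else 0)"
    using E unfolding povm_def by (intro sum.cong) auto
  also have "\<dots> = 1"
    using ket_normalized[OF S] by simp
  finally show "(\<Sum>y\<in>omega n. h S y) = 1"
    unfolding hE by (simp flip: Re_sum)
qed

lemma V_quantum_le_1: "h \<in> quantum n \<Longrightarrow> V n h \<le> 1"
  by (intro V_le_1 sum_score_le_1 quantum_strategy_distribution)
    (auto dest: FBV_member FBV_member_nonempty)

lemma quadratic_form_rank_one: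
  "(\<Sum>x\<in>A. \<Sum>x'\<in>A. cnj (v x) * of_real (w x * w x') * v x')
    = of_real ((cmod (\<Sum>x\<in>A. of_real (w x) * v x))\<^sup>2)"
proof -
  let ?Z = "\<Sum>x\<in>A. of_real (w x) * v x"
  have "(\<Sum>x\<in>A. \<Sum>x'\<in>A. cnj (v x) * of_real (w x * w x') * v x') = cnj ?Z * ?Z"
    unfolding cnj_sum sum_product by (intro sum.cong refl) (simp add: algebra_simps)
  also have "\<dots> = of_real ((cmod ?Z)\<^sup>2)"
    by (simp only: complex_norm_square mult.commute)
  finally show ?thesis .
qed

lemma psd_rank_one: "psd n (\<lambda>x x'. of_real (w x * w x'))"
  unfolding psd_def Let_def quadratic_form_rank_one by simp

lemma povm_rank_one:
  assumes "\<And>x x'. x \<in> omega n \<Longrightarrow> x' \<in> omega n \<Longrightarrow>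
    (\<Sum>y\<in>omega n. w y x * w y x') = (if x = x' then 1 else 0)"
  shows "povm n (\<lambda>y x x'. of_real (w y x * w y x'))"
  unfolding povm_def
proof (intro conjI ballI)
  show "psd n (\<lambda>x x'. of_real (w y x * w y x'))" for y
    by (rule psd_rank_one)
  show "(\<Sum>y\<in>omega n. complex_of_real (w y x * w y x')) = (if x = x' then 1 else 0)"
    if "x \<in> omega n" "x' \<in> omega n" for x x'
    unfolding of_real_sum[symmetric] assms[OF that] by simp
qed

(* Row y of the real orthogonal matrix 2|+><+| - I on n qubits. *)
definition grover_diffusion :: "nat \<Rightarrow> bool list \<Rightarrow> bool list \<Rightarrow> real" where
  "grover_diffusion n y x = 2 / 2 ^ n - (if x = y then 1 else 0)"

lemma grover_diffusion_orthonormal: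
  assumes x: "x \<in> omega n" and x': "x' \<in> omega n"
  shows "(\<Sum>y\<in>omega n. grover_diffusion n y x * grover_diffusion n y x') = (if x = x' then 1 else 0)"
proof -
  define a :: real where "a = 2 / 2 ^ n"
  have "(\<Sum>y\<in>omega n. grover_diffusion n y x * grover_diffusion n y x')
     = (\<Sum>y\<in>omega n. a * a - (if y = x then a else 0) - (if y = x' then a else 0)
          + (if y = x then (if x = x' then 1 else 0) else 0))"
    by (intro sum.cong refl) (auto simp: grover_diffusion_def a_def algebra_simps)
  also have "\<dots> = 2 ^ n * (a * a) - 2 * a + (if x = x' then 1 else 0)"
    using x x' by (simp add: sum.distrib sum_subtractf card_omega)
  also have "2 ^ n * (a * a) = 2 * a"
    by (simp add: a_def)
  finally show ?thesis
    by simp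
qed

lemma grover_diffusion_orthogonal_ket:
  assumes n: "n \<ge> 1" and S: "S \<subseteq> omega n" "card S = 2 ^ (n - 1)" and y: "y \<in> S"
  shows "(\<Sum>x\<in>omega n. of_real (grover_diffusion n y x) * ket S x) = 0"
proof -
  define c where "c = 1 / sqrt (real (card S))"
  have summand: "grover_diffusion n y x * (if x \<in> S then c else 0)
      = (if x \<in> S then 2 / 2 ^ n * c else 0) - (if x = y then c else 0)" for x
    using y by (simp add: grover_diffusion_def algebra_simps)
  have "(\<Sum>x\<in>omega n. if x \<in> S then 2 / 2 ^ n * c else 0) = (\<Sum>x\<in>{x \<in> omega n. x \<in> S}. 2 / 2 ^ n * c)"
    by (rule sum.inter_filter[symmetric]) simp
  also have "{x \<in> omega n. x \<in> S} = S"
    using S(1) by blast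
  also have "(\<Sum>x\<in>S. 2 / 2 ^ n * c) = c"
    using n S(2) by (cases n) simp_all
  finally have "(\<Sum>x\<in>omega n. grover_diffusion n y x * (if x \<in> S then c else 0)) = 0"
    using y S(1) by (auto simp: summand sum_subtractf)
  then have "complex_of_real (\<Sum>x\<in>omega n. grover_diffusion n y x * (if x \<in> S then c else 0)) = 0"
    by simp
  then show ?thesis
    unfolding of_real_sum by (simp add: ket_def c_def if_distrib cong: if_cong)
qed

lemma quantum_value_attains_1:
  assumes n: "n \<ge> 1"
  shows "\<exists>h\<in>quantum n. V n h = 1"
proof -
  define E where "E = (\<lambda>y x x'. complex_of_real (grover_diffusion n y x * grover_diffusion n y x'))"
  define h where "h = (\<lambda>S y. Re (\<Sum>x\<in>omega n. \<Sum>x'\<in>omega n. cnj (ket S x) * E y x x' * ket S x'))"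
  have "povm n E"
    unfolding E_def by (intro povm_rank_one grover_diffusion_orthonormal)
  then have h: "h \<in> quantum n"
    unfolding quantum_def h_def by blast
  have vanishes: "h S y = 0" if "S \<in> FBV n" "y \<in> S" for S y
  proof -
    have "h S y = (cmod (\<Sum>x\<in>omega n. of_real (grover_diffusion n y x) * ket S x))\<^sup>2"
      unfolding h_def E_def quadratic_form_rank_one by simp
    then show ?thesis
      using FBV_member[OF that(1)] that(2) n by (simp add: grover_diffusion_orthogonal_ket)
  qed
  have "V n h = 1"
  proof (rule V_eq_1[OF n])
    fix S
    assume S: "S \<in> FBV n"
    show "(\<Sum>y\<in>omega n. h S y * score n S y) = 1"
      using quantum_strategy_distribution(2)[OF h FBV_member(1)[OF S] FBV_member_nonempty[OF S]]
        vanishes[OF S] by (rule sum_score_eq_1)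
  qed
  with h show ?thesis
    by blast
qed

lemma stochastic_deterministic:
  assumes "\<And>x. x \<in> omega n \<Longrightarrow> f x \<in> omega n"
  shows "stochastic n (\<lambda>x y. if y = f x then 1 else 0)"
  using assms by (simp add: stochastic_def)

lemma V_classical_le:
  assumes n: "n \<ge> 1" and h: "h \<in> classical n"
  shows "V n h \<le> 1 / (2 ^ n - 1)"
proof -
  obtain g where g: "stochastic n g"
    and hg: "h = (\<lambda>S y. \<Sum>x\<in>omega n. g x y * (cmod (ket S x))\<^sup>2)"
    using h unfolding classical_def by blast
  have "0 \<le> (\<Sum>x\<in>omega n. g x x)"
    using g by (intro sum_nonneg) (simp add: stochastic_def)
  moreover have "(2 :: real) ^ n - 1 > 0"
    using n by simp
  ultimately show ?thesis
    unfolding hg V_classical[OF n g] by (simp add: divide_right_mono)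
qed

lemma classical_value_attains_bound:
  assumes n: "n \<ge> 1"
  shows "\<exists>h\<in>classical n. V n h = 1 / (2 ^ n - 1)"
proof -
  define g where "g = (\<lambda>x y. if y = flip_bit 0 x then 1 else 0 :: real)"
  have g: "stochastic n g"
    unfolding g_def by (rule stochastic_deterministic) simp
  have "g x x = 0" if "x \<in> omega n" for x
    using that n flip_bit_neq[of 0 x] by (auto simp: g_def omega_def)
  then have "V n (\<lambda>S y. \<Sum>x\<in>omega n. g x y * (cmod (ket S x))\<^sup>2) = 1 / (2 ^ n - 1)"
    by (simp add: V_classical[OF n g])
  moreover have "(\<lambda>S y. \<Sum>x\<in>omega n. g x y * (cmod (ket S x))\<^sup>2) \<in> classical n"
    unfolding classical_def using g by blast
  ultimately show ?thesis
    by blast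
qed

theorem mainTheorem1:
  fixes n :: nat
  assumes "n \<ge> 1"
  shows "(\<forall>h\<in>classical n. V n h \<le> 1 / (2 ^ n - 1))
       \<and> (\<exists>h\<in>classical n. V n h = 1 / (2 ^ n - 1))
       \<and> (SUP h\<in>classical n. V n h) = 1 / (2 ^ n - 1)
       \<and> (SUP h\<in>quantum n. V n h) = 1
       \<and> (SUP h\<in>quantum n. V n h) / (SUP h\<in>classical n. V n h) = 2 ^ n - 1"
proof -
  have classical_le: "\<forall>h\<in>classical n. V n h \<le> 1 / (2 ^ n - 1)"
    using V_classical_le[OF assms] by blast
  have classical_attained: "\<exists>h\<in>classical n. V n h = 1 / (2 ^ n - 1)"
    using classical_value_attains_bound[OF assms] .
  have classical_sup: "(SUP h\<in>classical n. V n h) = 1 / (2 ^ n - 1)"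
    using classical_le classical_attained by (intro cSup_eq_maximum) (auto intro: rev_image_eqI)
  have quantum_sup: "(SUP h\<in>quantum n. V n h) = 1"
    using V_quantum_le_1 quantum_value_attains_1[OF assms] by (intro cSup_eq_maximum) auto
  show ?thesis
    using classical_le classical_attained classical_sup quantum_sup by simp
qed

end
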